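(* Let $m\ge 2$ and $n\ge 2$ be integers. Let $\mathrm{AGL}_{n-1}(\mathbb{Z}_m)\subset GL_n(\mathbb{Z}_m)$ be the group of matrices $g(A,v)=\begin{pmatrix}A&v\\0&1\end{pmatrix}$ with $A\in GL_{n-1}(\mathbb{Z}_m)$ and $v\in\mathbb{Z}_m^{n-1}$ a column vector. Fix a standard basis vector $e_i\in\mathbb{Z}_m^{n-1}$ and let $B=g(I,e_i)$. Then $\mathrm{AGL}_{n-1}(\mathbb{Z}_m)$ is generated by $B$ together with the matrices $g(E_{k,l}(1),0)$ for all $1\le k\neq l\le n-1$ and $g(D(\alpha,1),0)$ for all $\alpha\in\mathbb{Z}_m^\times$.
   Context: For $k\neq l$, $\Delta_{k,l}$ denotes the $(n-1)\times(n-1)$ matrix with $(k,l)$-entry $1$ and all other entries $0$ (and $\Delta_{k,k}$ the matrix with $(k,k)$-entry $1$, others $0$); $E_{k,l}(\alpha)=I+\alpha\Delta_{k,l}$; $D(\alpha,k)=I+(\alpha-1)\Delta_{k,k}$, the diagonal matrix with $(k,k)$-entry $\alpha$ and other diagonal entries $1$. Multiplication in $\mathrm{AGL}_{n-1}(\mathbb{Z}_m)$ is $g(A_1,v_1)g(A_2,v_2)=g(A_1A_2,A_1v_2+v_1)$. *)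

theory Defs
  imports "Jordan_Normal_Form.Matrix" "Berlekamp_Zassenhaus.Finite_Field"
    "HOL-Algebra.Generated_Groups"
begin

text \<open>Z_m is the type 'm mod_ring with m = CARD('m) (class nontriv: m >= 2).
  Matrices are Jordan_Normal_Form matrices, indices are 0-based.
  d = n - 1 is the size of the linear part.\<close>

definition Delta :: "nat \<Rightarrow> nat \<Rightarrow> nat \<Rightarrow> 'a::comm_ring_1 mat" where
  "Delta d k l = mat d d (\<lambda>(i,j). if i = k \<and> j = l then 1 else 0)"

definition Emat :: "nat \<Rightarrow> nat \<Rightarrow> nat \<Rightarrow> 'a::comm_ring_1 \<Rightarrow> 'a mat" where
  "Emat d k l \<alpha> = 1\<^sub>m d + \<alpha> \<cdot>\<^sub>m Delta d k l"

definition Dmat :: "nat \<Rightarrow> 'a::comm_ring_1 \<Rightarrow> nat \<Rightarrow> 'a mat" where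
  "Dmat d \<alpha> k = 1\<^sub>m d + (\<alpha> - 1) \<cdot>\<^sub>m Delta d k k"

definition gAGL :: "'a::comm_ring_1 mat \<Rightarrow> 'a mat \<Rightarrow> 'a mat" where
  "gAGL A v = four_block_mat A v (0\<^sub>m 1 (dim_col A)) (1\<^sub>m 1)"

definition unit_vec_col :: "nat \<Rightarrow> nat \<Rightarrow> 'a::comm_ring_1 mat" where
  "unit_vec_col d i = mat d 1 (\<lambda>(r,c). if r = i then 1 else 0)"

definition AGL_carrier :: "nat \<Rightarrow> 'a::comm_ring_1 mat set" where
  "AGL_carrier d = {gAGL A v | A v. A \<in> carrier_mat d d \<and> invertible_mat A
                                     \<and> v \<in> carrier_mat d 1}"

definition AGL :: "nat \<Rightarrow> 'a::comm_ring_1 mat monoid" where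
  "AGL d = \<lparr>carrier = AGL_carrier d, mult = (*), one = 1\<^sub>m (d + 1)\<rparr>"

end

(*
  Every residue c is a multiple of 1, so E_{k,l}(1)^c = E_{k,l}(c) and all transvections of
  GL_{n-1}(Z_m) lie in the generated subgroup. An invertible matrix is reduced by such row
  operations, column by column from the right, to a matrix D(u,1): a Euclidean algorithm on the
  representatives 0, ..., m - 1 of the active part of the column leaves a single nonzero entry,
  which is a unit because the column is unimodular; adding a multiple of its row to the pivot row
  makes the pivot 1 (if the unit is on the pivot row itself, it is first copied to row 1), and the
  pivot then clears the rest of the column. In the first column there is no other row to copy
  through, so there the pivot stays a unit u, whence the D(u,1).
  Translations come from conjugation, g(A,0) g(I,w) g(A,0)^-1 = g(I,Aw), applied to B with
  A = E_{k,i}(c), and finally g(A,v) = g(I,v) g(A,0).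
*)
theory Submission
  imports Defs
begin

section \<open>Elementary matrices\<close>

lemma Delta_carrier [simp]: "Delta d k l \<in> carrier_mat d d"
  by (simp add: Delta_def)

lemma Delta_dims [simp]: "dim_row (Delta d k l) = d" "dim_col (Delta d k l) = d"
  by (simp_all add: Delta_def)

lemma Delta_index [simp]:
  "i < d \<Longrightarrow> j < d \<Longrightarrow> Delta d k l $$ (i,j) = (if i = k \<and> j = l then 1 else 0)"
  by (simp add: Delta_def)

lemma Emat_carrier [simp]: "Emat d k l c \<in> carrier_mat d d"
  by (simp add: Emat_def)

lemma Emat_dims [simp]: "dim_row (Emat d k l c) = d" "dim_col (Emat d k l c) = d"
  by (simp_all add: Emat_def)

lemma Emat_index:
  "i < d \<Longrightarrow> j < d \<Longrightarrow>
    Emat d k l c $$ (i,j) = (if i = j then 1 else 0) + (if i = k \<and> j = l then c else 0)"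
  by (simp add: Emat_def)

lemma Dmat_carrier [simp]: "Dmat d c k \<in> carrier_mat d d"
  by (simp add: Dmat_def)

lemma Dmat_dims [simp]: "dim_row (Dmat d c k) = d" "dim_col (Dmat d c k) = d"
  by (simp_all add: Dmat_def)

lemma Dmat_index:
  "i < d \<Longrightarrow> j < d \<Longrightarrow>
    Dmat d c k $$ (i,j) = (if i = j then 1 else 0) + (if i = k \<and> j = k then c - 1 else 0)"
  by (simp add: Dmat_def)

lemma index_Emat_mult:
  assumes "C \<in> carrier_mat d nc" "k < d" "l < d" "i < d" "j < nc"
  shows "(Emat d k l c * C) $$ (i,j) = C $$ (i,j) + (if i = k then c * C $$ (l,j) else 0)"
proof -
  have "(Emat d k l c * C) $$ (i,j) = (\<Sum>t\<in>{0..<d}. Emat d k l c $$ (i,t) * C $$ (t,j))"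
    using assms by (simp add: scalar_prod_def)
  also have "\<dots> = (\<Sum>t\<in>{0..<d}. (if i = t then C $$ (t,j) else 0)
                                  + (if i = k \<and> t = l then c * C $$ (t,j) else 0))"
    using assms by (intro sum.cong) (auto simp: Emat_index algebra_simps)
  also have "\<dots> = C $$ (i,j) + (if i = k then c * C $$ (l,j) else 0)"
    using assms by (simp add: sum.distrib)
  finally show ?thesis .
qed

lemma index_Dmat_mult:
  assumes "C \<in> carrier_mat d nc" "k < d" "i < d" "j < nc"
  shows "(Dmat d a k * C) $$ (i,j) = (if i = k then a else 1) * C $$ (i,j)"
proof -
  have "(Dmat d a k * C) $$ (i,j) = (\<Sum>t\<in>{0..<d}. Dmat d a k $$ (i,t) * C $$ (t,j))"
    using assms by (simp add: scalar_prod_def)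
  also have "\<dots> = (\<Sum>t\<in>{0..<d}. if t = i then (if i = k then a else 1) * C $$ (t,j) else 0)"
    using assms by (intro sum.cong) (auto simp: Dmat_index algebra_simps)
  also have "\<dots> = (if i = k then a else 1) * C $$ (i,j)"
    using assms by simp
  finally show ?thesis .
qed

lemma Emat_mult_Emat:
  assumes "k < d" "l < d" "k \<noteq> l"
  shows "Emat d k l a * Emat d k l b = Emat d k l (a + b)"
  by (rule eq_matI)
    (use assms in \<open>auto simp del: index_mult_mat(1)
                          simp: index_Emat_mult[OF Emat_carrier] Emat_index algebra_simps\<close>)

lemma Emat_0: "Emat d k l 0 = 1\<^sub>m d"
  by (rule eq_matI) (auto simp: Emat_index)

lemma Emat_mult_Emat_uminus:
  assumes "k < d" "l < d" "k \<noteq> l"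
  shows "Emat d k l (- c) * Emat d k l c = 1\<^sub>m d" "Emat d k l c * Emat d k l (- c) = 1\<^sub>m d"
  using assms by (simp_all add: Emat_mult_Emat Emat_0)

lemma Dmat_mult_Dmat: "k < d \<Longrightarrow> Dmat d a k * Dmat d b k = Dmat d (a * b) k"
  by (rule eq_matI)
    (auto simp del: index_mult_mat(1) simp: index_Dmat_mult[OF Dmat_carrier] Dmat_index)

lemma Dmat_1: "Dmat d 1 k = 1\<^sub>m d"
  by (rule eq_matI) (auto simp: Dmat_index)

lemma unit_vec_col_carrier [simp]: "unit_vec_col d k \<in> carrier_mat d 1"
  by (simp add: unit_vec_col_def)

lemma unit_vec_col_dims [simp]: "dim_row (unit_vec_col d k) = d" "dim_col (unit_vec_col d k) = 1"
  by (simp_all add: unit_vec_col_def)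

lemma unit_vec_col_index:
  "r < d \<Longrightarrow> c < 1 \<Longrightarrow> unit_vec_col d k $$ (r,c) = (if r = k then 1 else 0)"
  by (simp add: unit_vec_col_def)

lemma invertible_matI:
  assumes "A \<in> carrier_mat d d" "B \<in> carrier_mat d d" "A * B = 1\<^sub>m d" "B * A = 1\<^sub>m d"
  shows "invertible_mat A"
  using assms unfolding invertible_mat_def inverts_mat_def by auto

lemma invertible_matE:
  assumes "invertible_mat A" "A \<in> carrier_mat d d"
  obtains B where "B \<in> carrier_mat d d" "A * B = 1\<^sub>m d" "B * A = 1\<^sub>m d"
proof -
  from assms obtain B where B: "A * B = 1\<^sub>m (dim_row A)" "B * A = 1\<^sub>m (dim_row B)"
    unfolding invertible_mat_def inverts_mat_def by blast
  have "dim_col B = d" using arg_cong[OF B(1), of dim_col] assms by simp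
  moreover have "dim_row B = d" using arg_cong[OF B(2), of dim_col] assms by simp
  ultimately show ?thesis using that[of B] B assms by auto
qed

lemma invertible_mat_mult:
  fixes A B :: "'a::semiring_1 mat"
  assumes "A \<in> carrier_mat d d" "B \<in> carrier_mat d d" "invertible_mat A" "invertible_mat B"
  shows "invertible_mat (A * B)"
proof -
  obtain A' where A': "A' \<in> carrier_mat d d" "A * A' = 1\<^sub>m d" "A' * A = 1\<^sub>m d"
    using invertible_matE[OF assms(3,1)] .
  obtain B' where B': "B' \<in> carrier_mat d d" "B * B' = 1\<^sub>m d" "B' * B = 1\<^sub>m d"
    using invertible_matE[OF assms(4,2)] .
  have product_inverse: "(X * Y) * (Y' * X') = 1\<^sub>m d"
    if "X \<in> carrier_mat d d" "Y \<in> carrier_mat d d" "X' \<in> carrier_mat d d" "Y' \<in> carrier_mat d d"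
      "X * X' = 1\<^sub>m d" "Y * Y' = 1\<^sub>m d"
    for X Y X' Y' :: "'a mat"
  proof -
    have "(X * Y) * (Y' * X') = X * (Y * (Y' * X'))"
      by (rule assoc_mult_mat) (use that in auto)
    also have "Y * (Y' * X') = (Y * Y') * X'"
      by (rule assoc_mult_mat[symmetric]) (use that in auto)
    finally show ?thesis using that by simp
  qed
  show ?thesis
    by (rule invertible_matI[OF _ _ product_inverse[of A B A' B'] product_inverse[of B' A' B A]])
      (use assms A' B' in auto)
qed

lemma invertible_Emat:
  "k < d \<Longrightarrow> l < d \<Longrightarrow> k \<noteq> l \<Longrightarrow> invertible_mat (Emat d k l c)"
  by (rule invertible_matI[of _ d "Emat d k l (- c)"]) (simp_all add: Emat_mult_Emat_uminus)

lemma invertible_Dmat: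
  assumes "\<alpha> dvd 1"
  shows "invertible_mat (Dmat d \<alpha> k)"
proof (cases "k < d")
  case True
  obtain w where w: "1 = \<alpha> * w" using assms by (auto elim: dvdE)
  show ?thesis
    by (rule invertible_matI[of _ d "Dmat d w k"])
      (use True w in \<open>simp_all add: Dmat_mult_Dmat Dmat_1 mult.commute\<close>)
next
  case False
  then have "Dmat d \<alpha> k = 1\<^sub>m d" by (intro eq_matI) (auto simp: Dmat_index)
  then show ?thesis by (auto intro: invertible_matI[of _ d "1\<^sub>m d"])
qed

lemma gAGL_mult:
  assumes "A \<in> carrier_mat d d" "v \<in> carrier_mat d 1" "B \<in> carrier_mat d d" "w \<in> carrier_mat d 1"
  shows "gAGL A v * gAGL B w = gAGL (A * B) (A * w + v)"
proof -
  have "four_block_mat A v (0\<^sub>m 1 d) (1\<^sub>m 1) * four_block_mat B w (0\<^sub>m 1 d) (1\<^sub>m 1)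
    = four_block_mat (A * B + v * 0\<^sub>m 1 d) (A * w + v * 1\<^sub>m 1)
       (0\<^sub>m 1 d * B + 1\<^sub>m 1 * 0\<^sub>m 1 d) (0\<^sub>m 1 d * w + 1\<^sub>m 1 * 1\<^sub>m 1)"
    by (rule mult_four_block_mat) (use assms in auto)
  also have "\<dots> = four_block_mat (A * B) (A * w + v) (0\<^sub>m 1 d) (1\<^sub>m 1)"
    using assms by simp
  finally show ?thesis using assms by (simp add: gAGL_def)
qed

lemma gAGL_one: "gAGL (1\<^sub>m d) (0\<^sub>m d 1) = 1\<^sub>m (d + 1)"
  by (simp add: gAGL_def)

lemma gAGL_carrier:
  "A \<in> carrier_mat d d \<Longrightarrow> v \<in> carrier_mat d 1 \<Longrightarrow> gAGL A v \<in> carrier_mat (d + 1) (d + 1)"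
  unfolding gAGL_def by (rule four_block_carrier_mat) auto

lemma gAGL_in_AGL:
  "A \<in> carrier_mat d d \<Longrightarrow> invertible_mat A \<Longrightarrow> v \<in> carrier_mat d 1 \<Longrightarrow> gAGL A v \<in> carrier (AGL d)"
  by (auto simp: AGL_def AGL_carrier_def)

lemma AGL_carrierE:
  assumes "x \<in> carrier (AGL d)"
  obtains A v where "x = gAGL A v" "A \<in> carrier_mat d d" "invertible_mat A" "v \<in> carrier_mat d 1"
  using assms by (auto simp: AGL_def AGL_carrier_def)

lemma AGL_group: "group (AGL d :: 'a::comm_ring_1 mat monoid)"
proof (rule groupI)
  have square: "x \<in> carrier_mat (d + 1) (d + 1)" if "x \<in> carrier (AGL d :: 'a mat monoid)" for x
    using that gAGL_carrier by (metis AGL_carrierE)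
  show "x \<otimes>\<^bsub>AGL d\<^esub> y \<in> carrier (AGL d)"
    if xy: "x \<in> carrier (AGL d)" "y \<in> carrier (AGL d)" for x y :: "'a mat"
  proof -
    obtain A v
      where x: "x = gAGL A v" "A \<in> carrier_mat d d" "invertible_mat A" "v \<in> carrier_mat d 1"
      using xy(1) by (rule AGL_carrierE)
    obtain B w
      where y: "y = gAGL B w" "B \<in> carrier_mat d d" "invertible_mat B" "w \<in> carrier_mat d 1"
      using xy(2) by (rule AGL_carrierE)
    have "x * y = gAGL (A * B) (A * w + v)" using x y gAGL_mult by blast
    moreover have "gAGL (A * B) (A * w + v) \<in> carrier (AGL d)"
      using x y by (intro gAGL_in_AGL invertible_mat_mult) auto
    ultimately show ?thesis by (simp add: AGL_def)
  qed
  have "gAGL (1\<^sub>m d) (0\<^sub>m d 1) \<in> carrier (AGL d :: 'a mat monoid)"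
    by (rule gAGL_in_AGL) (auto intro: invertible_matI[of _ d "1\<^sub>m d"])
  then show "\<one>\<^bsub>AGL d\<^esub> \<in> carrier (AGL d :: 'a mat monoid)"
    unfolding gAGL_one by (simp add: AGL_def)
  show "x \<otimes>\<^bsub>AGL d\<^esub> y \<otimes>\<^bsub>AGL d\<^esub> z = x \<otimes>\<^bsub>AGL d\<^esub> (y \<otimes>\<^bsub>AGL d\<^esub> z)"
    if "x \<in> carrier (AGL d)" "y \<in> carrier (AGL d)" "z \<in> carrier (AGL d)" for x y z :: "'a mat"
    using square[OF that(1)] square[OF that(2)] square[OF that(3)] by (simp add: AGL_def)
  show "\<one>\<^bsub>AGL d\<^esub> \<otimes>\<^bsub>AGL d\<^esub> x = x" if "x \<in> carrier (AGL d)" for x :: "'a mat"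
    using square[OF that] by (simp add: AGL_def)
  show "\<exists>y\<in>carrier (AGL d). y \<otimes>\<^bsub>AGL d\<^esub> x = \<one>\<^bsub>AGL d\<^esub>"
    if x_in: "x \<in> carrier (AGL d)" for x :: "'a mat"
  proof -
    obtain A v
      where x: "x = gAGL A v" "A \<in> carrier_mat d d" "invertible_mat A" "v \<in> carrier_mat d 1"
      using x_in by (rule AGL_carrierE)
    obtain A' where A': "A' \<in> carrier_mat d d" "A * A' = 1\<^sub>m d" "A' * A = 1\<^sub>m d"
      using invertible_matE[OF x(3,2)] .
    have A'v: "A' * v \<in> carrier_mat d 1" using A' x by auto
    have "A' * v + - (A' * v) = 0\<^sub>m d 1"
      using A'v by (subst comm_add_mat[of _ d 1]) auto
    moreover have "gAGL A' (- (A' * v)) * x = gAGL (A' * A) (A' * v + - (A' * v))"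
      unfolding x(1) by (rule gAGL_mult) (use x A' A'v in auto)
    ultimately have "gAGL A' (- (A' * v)) * x = 1\<^sub>m (d + 1)"
      using A'(3) by (simp only: gAGL_one)
    then have "gAGL A' (- (A' * v)) \<otimes>\<^bsub>AGL d\<^esub> x = \<one>\<^bsub>AGL d\<^esub>" by (simp add: AGL_def)
    moreover have "gAGL A' (- (A' * v)) \<in> carrier (AGL d)"
      using A' x A'v by (intro gAGL_in_AGL invertible_matI[of A' d A]) auto
    ultimately show ?thesis by blast
  qed
qed

definition AGL_gens :: "nat \<Rightarrow> nat \<Rightarrow> 'a::comm_ring_1 mat set" where
  "AGL_gens d i = {gAGL (1\<^sub>m d) (unit_vec_col d i)}
                \<union> {gAGL (Emat d k l 1) (0\<^sub>m d 1) | k l. k < d \<and> l < d \<and> k \<noteq> l}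
                \<union> {gAGL (Dmat d \<alpha> 0) (0\<^sub>m d 1) | \<alpha>. \<alpha> dvd 1}"

abbreviation AGL_span :: "nat \<Rightarrow> nat \<Rightarrow> 'a::comm_ring_1 mat set" where
  "AGL_span d i \<equiv> generate (AGL d) (AGL_gens d i)"

lemma AGL_span_mult: "x \<in> AGL_span d i \<Longrightarrow> y \<in> AGL_span d i \<Longrightarrow> x * y \<in> AGL_span d i"
  using generate.eng[of x "AGL d" "AGL_gens d i" y] by (simp add: AGL_def)

lemma AGL_span_one: "gAGL (1\<^sub>m d) (0\<^sub>m d 1) \<in> AGL_span d i"
  using generate.one[of "AGL d" "AGL_gens d i"] unfolding gAGL_one by (simp add: AGL_def)

definition linear_in_span :: "nat \<Rightarrow> nat \<Rightarrow> 'a::comm_ring_1 mat \<Rightarrow> bool" where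
  "linear_in_span d i A \<longleftrightarrow> A \<in> carrier_mat d d \<and> gAGL A (0\<^sub>m d 1) \<in> AGL_span d i"

definition translation_in_span :: "nat \<Rightarrow> nat \<Rightarrow> 'a::comm_ring_1 mat \<Rightarrow> bool" where
  "translation_in_span d i v \<longleftrightarrow> v \<in> carrier_mat d 1 \<and> gAGL (1\<^sub>m d) v \<in> AGL_span d i"

lemma linear_in_span_mult:
  assumes "linear_in_span d i A" "linear_in_span d i B"
  shows "linear_in_span d i (A * B)"
proof -
  have A: "A \<in> carrier_mat d d" and B: "B \<in> carrier_mat d d"
    using assms by (auto simp: linear_in_span_def)
  have "gAGL A (0\<^sub>m d 1) * gAGL B (0\<^sub>m d 1) = gAGL (A * B) (0\<^sub>m d 1)"
    using A B by (simp add: gAGL_mult)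
  then show ?thesis
    using assms AGL_span_mult A B by (metis linear_in_span_def mult_carrier_mat)
qed

lemma linear_in_span_one: "linear_in_span d i (1\<^sub>m d)"
  using AGL_span_one by (simp add: linear_in_span_def)

lemma linear_in_span_Emat_1:
  "k < d \<Longrightarrow> l < d \<Longrightarrow> k \<noteq> l \<Longrightarrow> linear_in_span d i (Emat d k l 1)"
  by (auto intro!: generate.incl simp: linear_in_span_def AGL_gens_def)

lemma linear_in_span_Dmat: "\<alpha> dvd 1 \<Longrightarrow> linear_in_span d i (Dmat d \<alpha> 0)"
  by (auto intro!: generate.incl simp: linear_in_span_def AGL_gens_def)

lemma linear_in_span_Emat_of_nat:
  assumes "k < d" "l < d" "k \<noteq> l"
  shows "linear_in_span d i (Emat d k l (of_nat N))"
proof (induction N)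
  case 0
  then show ?case by (simp add: Emat_0 linear_in_span_one)
next
  case (Suc N)
  have "Emat d k l 1 * Emat d k l (of_nat N) = Emat d k l (of_nat (Suc N))"
    using assms by (simp add: Emat_mult_Emat add.commute)
  then show ?case
    using linear_in_span_mult[OF linear_in_span_Emat_1[OF assms] Suc] by metis
qed

lemma mod_ring_of_nat_surj: "\<exists>N. (c :: 'm::nontriv mod_ring) = of_nat N"
  by (rule exI[of _ "nat (to_int_mod_ring c)"], transfer) auto

lemma linear_in_span_Emat:
  assumes "k < d" "l < d" "k \<noteq> l"
  shows "linear_in_span d i (Emat d k l (c :: 'm::nontriv mod_ring))"
  using mod_ring_of_nat_surj[of c] linear_in_span_Emat_of_nat[OF assms] by auto

lemma linear_in_span_row_op:
  assumes "k < d" "l < d" "k \<noteq> l" "C \<in> carrier_mat d d"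
    and "linear_in_span d i (Emat d k l c * C)"
  shows "linear_in_span d i (C :: 'm::nontriv mod_ring mat)"
proof -
  have "Emat d k l (- c) * (Emat d k l c * C) = (Emat d k l (- c) * Emat d k l c) * C"
    using assms by (simp add: assoc_mult_mat[of _ d d _ d _ d])
  also have "\<dots> = C" using assms by (simp add: Emat_mult_Emat_uminus)
  finally show ?thesis
    using linear_in_span_mult[OF linear_in_span_Emat[OF assms(1-3), where c = "- c"] assms(5)]
    by simp
qed

section \<open>Column reduction of invertible matrices\<close>

text \<open>Only a left inverse is recorded: it survives row operations and is all that the
  reduction needs.\<close>

definition tail_identity :: "nat \<Rightarrow> nat \<Rightarrow> 'a::comm_ring_1 mat \<Rightarrow> bool" where
  "tail_identity d t C \<longleftrightarrow> C \<in> carrier_mat d d \<and> (\<exists>B\<in>carrier_mat d d. B * C = 1\<^sub>m d)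
     \<and> (\<forall>r<d. \<forall>j<d. t < j \<longrightarrow> C $$ (r,j) = (if r = j then 1 else 0))"

lemma tail_identity_row_op:
  assumes "tail_identity d t C" "k < d" "l < d" "l \<le> t" "k \<noteq> l"
  shows "tail_identity d t (Emat d k l c * C)"
proof -
  have C: "C \<in> carrier_mat d d" using assms(1) by (simp add: tail_identity_def)
  obtain B where B: "B \<in> carrier_mat d d" "B * C = 1\<^sub>m d"
    using assms(1) by (auto simp: tail_identity_def)
  have "(B * Emat d k l (- c)) * (Emat d k l c * C) = B * (Emat d k l (- c) * (Emat d k l c * C))"
    by (rule assoc_mult_mat) (use B C in auto)
  also have "Emat d k l (- c) * (Emat d k l c * C) = (Emat d k l (- c) * Emat d k l c) * C"
    by (rule assoc_mult_mat[symmetric]) (use C in auto)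
  also have "B * \<dots> = 1\<^sub>m d" using assms B C by (simp add: Emat_mult_Emat_uminus)
  finally have "\<exists>B\<in>carrier_mat d d. B * (Emat d k l c * C) = 1\<^sub>m d"
    using B by (intro bexI[of _ "B * Emat d k l (- c)"]) auto
  moreover have "\<forall>r<d. \<forall>j<d. t < j \<longrightarrow> (Emat d k l c * C) $$ (r,j) = (if r = j then 1 else 0)"
    using assms C by (auto simp del: index_mult_mat(1) simp: index_Emat_mult tail_identity_def)
  moreover have "Emat d k l c * C \<in> carrier_mat d d" by (rule mult_carrier_mat[OF Emat_carrier C])
  ultimately show ?thesis by (simp add: tail_identity_def)
qed

text \<open>Reading the \<open>t\<close>-th row of \<open>B * C = 1\<close>: the entries of \<open>B\<close> right of \<open>t\<close> vanish,
  and what remains says that the upper part of column \<open>t\<close> is unimodular.\<close>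

lemma tail_identity_unimodular:
  assumes "t < d" "tail_identity d t C"
  shows "\<exists>b. (\<Sum>r\<in>{0..t}. b r * C $$ (r,t)) = 1"
proof -
  obtain B where B: "B \<in> carrier_mat d d" "B * C = 1\<^sub>m d" and C: "C \<in> carrier_mat d d"
    using assms(2) by (auto simp: tail_identity_def)
  have row_t: "(\<Sum>r\<in>{0..<d}. B $$ (t,r) * C $$ (r,j)) = (if t = j then 1 else 0)" if "j < d" for j
  proof -
    have "(B * C) $$ (t,j) = (\<Sum>r\<in>{0..<d}. B $$ (t,r) * C $$ (r,j))"
      using B(1) C assms(1) that by (simp add: scalar_prod_def)
    then show ?thesis using B(2) assms(1) that by simp
  qed
  have B_zero: "B $$ (t,j) = 0" if "t < j" "j < d" for j
  proof -
    have "(\<Sum>r\<in>{0..<d}. B $$ (t,r) * C $$ (r,j)) = (\<Sum>r\<in>{0..<d}. if r = j then B $$ (t,r) else 0)"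
      using assms(2) that by (intro sum.cong) (auto simp: tail_identity_def)
    then show ?thesis using row_t[OF that(2)] that by simp
  qed
  have "(\<Sum>r\<in>{0..<d}. B $$ (t,r) * C $$ (r,t)) = (\<Sum>r\<in>{0..t}. B $$ (t,r) * C $$ (r,t))"
    using assms(1) B_zero by (intro sum.mono_neutral_right) auto
  then show ?thesis using row_t[OF assms(1)] by auto
qed

lemma unit_of_unimodular_single_support:
  fixes x :: "nat \<Rightarrow> 'a::comm_ring_1"
  assumes "(\<Sum>r\<in>{0..t}. b r * x r) = 1"
    and "\<And>j k. j \<le> t \<Longrightarrow> k \<le> t \<Longrightarrow> x j \<noteq> 0 \<Longrightarrow> x k \<noteq> 0 \<Longrightarrow> j = k"
  shows "\<exists>j\<le>t. x j dvd 1"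
proof -
  have "\<exists>j\<in>{0..t}. x j \<noteq> 0"
  proof (rule ccontr)
    assume "\<not> (\<exists>j\<in>{0..t}. x j \<noteq> 0)"
    then have "(\<Sum>r\<in>{0..t}. b r * x r) = 0" by simp
    then show False using assms(1) by simp
  qed
  then obtain j where j: "j \<le> t" "x j \<noteq> 0" by auto
  have "(\<Sum>r\<in>{0..t}. b r * x r) = (\<Sum>r\<in>{0..t}. if r = j then b j * x j else 0)"
    using j by (intro sum.cong) (auto dest: assms(2)[of _ j])
  then have "x j * b j = 1" using assms(1) j by (simp add: mult.commute)
  then show ?thesis using j by (metis dvd_triv_left)
qed

lemma to_int_mod_ring_diff:
  assumes "to_int_mod_ring y \<le> to_int_mod_ring (x :: 'm::nontriv mod_ring)"
  shows "to_int_mod_ring (x - y) = to_int_mod_ring x - to_int_mod_ring y"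
  using assms by transfer auto

lemma to_int_mod_ring_pos: "x \<noteq> 0 \<Longrightarrow> 0 < to_int_mod_ring (x :: 'm::nontriv mod_ring)"
  by transfer auto

definition column_weight :: "nat \<Rightarrow> 'm::nontriv mod_ring mat \<Rightarrow> nat" where
  "column_weight t C = (\<Sum>r\<in>{0..t}. nat (to_int_mod_ring (C $$ (r,t))))"

lemma column_weight_row_op_less:
  fixes C :: "'m::nontriv mod_ring mat"
  assumes "C \<in> carrier_mat d d" "t < d" "j \<le> t" "k \<le> t" "j \<noteq> k" "C $$ (k,t) \<noteq> 0"
    and "to_int_mod_ring (C $$ (k,t)) \<le> to_int_mod_ring (C $$ (j,t))"
  shows "column_weight t (Emat d j k (-1) * C) < column_weight t C"
proof -
  define C1 where "C1 = Emat d j k (-1) * C"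
  have entry_j: "C1 $$ (j,t) = C $$ (j,t) - C $$ (k,t)"
    unfolding C1_def using assms by (subst index_Emat_mult) auto
  have entry_other: "C1 $$ (r,t) = C $$ (r,t)" if "r \<noteq> j" "r \<le> t" for r
    unfolding C1_def using assms that by (subst index_Emat_mult) auto
  have "0 < to_int_mod_ring (C $$ (k,t))"
    using assms(6) by (rule to_int_mod_ring_pos)
  moreover have "to_int_mod_ring (C1 $$ (j,t))
                 = to_int_mod_ring (C $$ (j,t)) - to_int_mod_ring (C $$ (k,t))"
    unfolding entry_j by (rule to_int_mod_ring_diff[OF assms(7)])
  ultimately have less_j: "nat (to_int_mod_ring (C1 $$ (j,t))) < nat (to_int_mod_ring (C $$ (j,t)))"
    using assms(7) by simp
  have "(\<Sum>r\<in>{0..t}. nat (to_int_mod_ring (C1 $$ (r,t))))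
        < (\<Sum>r\<in>{0..t}. nat (to_int_mod_ring (C $$ (r,t))))"
  proof (rule sum_strict_mono_ex1)
    show "\<forall>r\<in>{0..t}. nat (to_int_mod_ring (C1 $$ (r,t))) \<le> nat (to_int_mod_ring (C $$ (r,t)))"
    proof
      fix r assume "r \<in> {0..t}"
      then show "nat (to_int_mod_ring (C1 $$ (r,t))) \<le> nat (to_int_mod_ring (C $$ (r,t)))"
        using less_j entry_other[of r] by (cases "r = j") auto
    qed
    show "\<exists>r\<in>{0..t}. nat (to_int_mod_ring (C1 $$ (r,t))) < nat (to_int_mod_ring (C $$ (r,t)))"
      using less_j assms(3) by auto
  qed simp
  then show ?thesis unfolding column_weight_def C1_def .
qed

text \<open>Subtracting a row from another one whose entry in column \<open>t\<close> has a larger representative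
  decreases the weight of the column; when no such pair exists, at most one entry is nonzero.\<close>

lemma linear_in_span_by_unit_entry:
  fixes C :: "'m::nontriv mod_ring mat"
  assumes "t < d"
    and unit_case: "\<And>C' :: 'm mod_ring mat. tail_identity d t C' \<Longrightarrow> \<exists>j\<le>t. C' $$ (j,t) dvd 1
                      \<Longrightarrow> linear_in_span d i C'"
  shows "tail_identity d t C \<Longrightarrow> linear_in_span d i C"
proof (induction "column_weight t C" arbitrary: C rule: less_induct)
  case (less C)
  have C: "C \<in> carrier_mat d d" using less(2) by (simp add: tail_identity_def)
  show ?case
  proof (cases "\<exists>j k. j \<le> t \<and> k \<le> t \<and> j \<noteq> k \<and> C $$ (j,t) \<noteq> 0 \<and> C $$ (k,t) \<noteq> 0
                  \<and> to_int_mod_ring (C $$ (k,t)) \<le> to_int_mod_ring (C $$ (j,t))")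
    case True
    then obtain j k where jk: "j \<le> t" "k \<le> t" "j \<noteq> k" "C $$ (k,t) \<noteq> 0"
      "to_int_mod_ring (C $$ (k,t)) \<le> to_int_mod_ring (C $$ (j,t))" by blast
    have "column_weight t (Emat d j k (-1) * C) < column_weight t C"
      by (rule column_weight_row_op_less) (use C jk assms(1) in auto)
    moreover have "tail_identity d t (Emat d j k (-1) * C)"
      by (rule tail_identity_row_op) (use less(2) jk assms(1) in auto)
    ultimately have "linear_in_span d i (Emat d j k (-1) * C)" by (rule less(1))
    then show ?thesis using jk assms(1) C by (intro linear_in_span_row_op[of j d k C i "-1"]) auto
  next
    case False
    have single: "j = k" if "j \<le> t" "k \<le> t" "C $$ (j,t) \<noteq> 0" "C $$ (k,t) \<noteq> 0" for j k
    proof (rule ccontr)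
      assume "j \<noteq> k"
      consider "to_int_mod_ring (C $$ (k,t)) \<le> to_int_mod_ring (C $$ (j,t))"
        | "to_int_mod_ring (C $$ (j,t)) \<le> to_int_mod_ring (C $$ (k,t))" by linarith
      then show False using False that \<open>j \<noteq> k\<close> by cases blast+
    qed
    obtain b where "(\<Sum>r\<in>{0..t}. b r * C $$ (r,t)) = 1"
      using tail_identity_unimodular[OF assms(1) less(2)] by blast
    then have "\<exists>j\<le>t. C $$ (j,t) dvd 1" using single by (rule unit_of_unimodular_single_support)
    then show ?thesis using unit_case less(2) by blast
  qed
qed

lemma linear_in_span_by_unit_pivot:
  fixes C :: "'m::nontriv mod_ring mat"
  assumes "0 < t" "t < d"
    and pivot_case: "\<And>C' :: 'm mod_ring mat. tail_identity d t C' \<Longrightarrow> C' $$ (t,t) = 1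
                       \<Longrightarrow> linear_in_span d i C'"
    and "tail_identity d t C" "j \<le> t" "C $$ (j,t) * w = 1"
  shows "linear_in_span d i C"
proof -
  have off_pivot: "linear_in_span d i C0"
    if C0: "tail_identity d t C0" "j0 \<le> t" "j0 \<noteq> t" "C0 $$ (j0,t) * w0 = 1"
    for C0 :: "'m mod_ring mat" and j0 w0
  proof -
    define C1 where "C1 = Emat d t j0 ((1 - C0 $$ (t,t)) * w0) * C0"
    have C0c: "C0 \<in> carrier_mat d d" "j0 < d" using C0 assms(2) by (auto simp: tail_identity_def)
    have "C1 $$ (t,t) = C0 $$ (t,t) + (1 - C0 $$ (t,t)) * (C0 $$ (j0,t) * w0)"
      unfolding C1_def using C0c assms(2) by (subst index_Emat_mult) (auto simp: algebra_simps)
    then have "C1 $$ (t,t) = 1" using C0(4) by simp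
    moreover have "tail_identity d t C1"
      unfolding C1_def by (rule tail_identity_row_op) (use C0 C0c assms(2) in auto)
    ultimately have "linear_in_span d i C1" by (intro pivot_case)
    then show ?thesis
      unfolding C1_def using C0 C0c assms(2) by (intro linear_in_span_row_op[of t d j0 C0 i]) auto
  qed
  show ?thesis
  proof (cases "j = t")
    case False
    then show ?thesis using off_pivot assms(4-6) by blast
  next
    case True
    \<comment> \<open>the unit is on the pivot row, which cannot be added to itself: go through row 0\<close>
    define C2 where "C2 = Emat d 0 t ((1 - C $$ (0,t)) * w) * C"
    have Cc: "C \<in> carrier_mat d d" using assms(4) by (simp add: tail_identity_def)
    have "C2 $$ (0,t) = C $$ (0,t) + (1 - C $$ (0,t)) * (C $$ (t,t) * w)"
      unfolding C2_def using Cc assms(1,2) by (subst index_Emat_mult) (auto simp: algebra_simps)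
    then have "C2 $$ (0,t) * 1 = 1" using assms(6) True by simp
    moreover have "tail_identity d t C2"
      unfolding C2_def by (rule tail_identity_row_op) (use assms in auto)
    ultimately have "linear_in_span d i C2" using assms(1) by (intro off_pivot) auto
    then show ?thesis
      unfolding C2_def using assms Cc by (intro linear_in_span_row_op[of 0 d t C i]) auto
  qed
qed

lemma linear_in_span_by_cleared_column:
  fixes C :: "'m::nontriv mod_ring mat"
  assumes "t < d" "u * w = 1"
    and cleared_case: "\<And>C' :: 'm mod_ring mat. tail_identity d t C'
                          \<Longrightarrow> \<forall>r<d. C' $$ (r,t) = (if r = t then u else 0)
                          \<Longrightarrow> linear_in_span d i C'"
  shows "tail_identity d t C \<Longrightarrow> C $$ (t,t) = u \<Longrightarrow> linear_in_span d i C"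
proof (induction "card {r\<in>{0..<d}. r \<noteq> t \<and> C $$ (r,t) \<noteq> 0}" arbitrary: C rule: less_induct)
  case (less C)
  have C: "C \<in> carrier_mat d d" using less(2) by (simp add: tail_identity_def)
  show ?case
  proof (cases "\<exists>r<d. r \<noteq> t \<and> C $$ (r,t) \<noteq> 0")
    case False
    then show ?thesis using less(2,3) by (intro cleared_case) auto
  next
    case True
    then obtain r where r: "r < d" "r \<noteq> t" "C $$ (r,t) \<noteq> 0" by blast
    define C1 where "C1 = Emat d r t (- (C $$ (r,t) * w)) * C"
    have entry:
      "C1 $$ (x,t) = C $$ (x,t) + (if x = r then - (C $$ (r,t) * w) * C $$ (t,t) else 0)"
      if "x < d" for x
      unfolding C1_def using that C r assms(1) by (subst index_Emat_mult) auto
    have "C $$ (r,t) + - (C $$ (r,t) * w) * u = C $$ (r,t) - C $$ (r,t) * (u * w)"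
      by (simp add: algebra_simps)
    then have "C1 $$ (r,t) = 0" using entry[OF r(1)] less(3) assms(2) by simp
    moreover have "C1 $$ (x,t) = C $$ (x,t)" if "x < d" "x \<noteq> r" for x
      using entry[OF that(1)] that(2) by simp
    ultimately have "{x\<in>{0..<d}. x \<noteq> t \<and> C1 $$ (x,t) \<noteq> 0}
                     \<subset> {x\<in>{0..<d}. x \<noteq> t \<and> C $$ (x,t) \<noteq> 0}"
      using r by auto metis
    then have "card {x\<in>{0..<d}. x \<noteq> t \<and> C1 $$ (x,t) \<noteq> 0}
               < card {x\<in>{0..<d}. x \<noteq> t \<and> C $$ (x,t) \<noteq> 0}"
      by (rule psubset_card_mono[rotated]) simp
    moreover have "tail_identity d t C1"
      unfolding C1_def by (rule tail_identity_row_op) (use less(2) r assms(1) in auto)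
    moreover have "C1 $$ (t,t) = u" using entry[OF assms(1)] r less(3) by simp
    ultimately have "linear_in_span d i C1" by (rule less(1))
    then show ?thesis
      unfolding C1_def using r assms(1) C by (intro linear_in_span_row_op[of r d t C i]) auto
  qed
qed

lemma tail_identity_first_column_Dmat:
  assumes "tail_identity d 0 C" "\<forall>r<d. C $$ (r,0) = (if r = 0 then u else 0)"
  shows "C = Dmat d u 0"
proof (rule eq_matI)
  fix r j assume "r < dim_row (Dmat d u 0)" "j < dim_col (Dmat d u 0)"
  then show "C $$ (r,j) = Dmat d u 0 $$ (r,j)"
    using assms by (cases "j = 0") (auto simp: Dmat_index tail_identity_def)
qed (use assms in \<open>auto simp: tail_identity_def\<close>)

lemma tail_identity_Suc_cleared:
  assumes "tail_identity d (Suc t) D" "\<forall>r<d. D $$ (r, Suc t) = (if r = Suc t then 1 else 0)"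
  shows "tail_identity d t D"
proof -
  have "\<forall>r<d. \<forall>j<d. t < j \<longrightarrow> D $$ (r,j) = (if r = j then 1 else 0)"
    using assms unfolding tail_identity_def by (metis Suc_lessI)
  then show ?thesis using assms(1) by (simp add: tail_identity_def)
qed

lemma tail_identity_linear_in_span:
  assumes "t < d" "tail_identity d t (C :: 'm::nontriv mod_ring mat)"
  shows "linear_in_span d i C"
  using assms
proof (induction t arbitrary: C)
  case 0
  show ?case
  proof (rule linear_in_span_by_unit_entry[OF 0(1) _ 0(2)])
    fix C' :: "'m mod_ring mat"
    assume C': "tail_identity d 0 C'" "\<exists>j\<le>0. C' $$ (j,0) dvd 1"
    then obtain w where "1 = C' $$ (0,0) * w" by (auto elim!: dvdE)
    then have w: "C' $$ (0,0) * w = 1" by simp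
    show "linear_in_span d i C'"
    proof (rule linear_in_span_by_cleared_column[OF 0(1) w _ C'(1) refl])
      fix C'' :: "'m mod_ring mat"
      assume "tail_identity d 0 C''" "\<forall>r<d. C'' $$ (r,0) = (if r = 0 then C' $$ (0,0) else 0)"
      then have "C'' = Dmat d (C' $$ (0,0)) 0" by (rule tail_identity_first_column_Dmat)
      moreover have "C' $$ (0,0) dvd 1" using w by (metis dvd_triv_left)
      ultimately show "linear_in_span d i C''" by (simp add: linear_in_span_Dmat)
    qed
  qed
next
  case (Suc t)
  show ?case
  proof (rule linear_in_span_by_unit_entry[OF Suc(2) _ Suc(3)])
    fix C' :: "'m mod_ring mat"
    assume C': "tail_identity d (Suc t) C'" "\<exists>j\<le>Suc t. C' $$ (j,Suc t) dvd 1"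
    then obtain j w where "j \<le> Suc t" "1 = C' $$ (j,Suc t) * w" by (auto elim!: dvdE)
    then have j: "j \<le> Suc t" "C' $$ (j,Suc t) * w = 1" by simp_all
    show "linear_in_span d i C'"
    proof (rule linear_in_span_by_unit_pivot[OF _ Suc(2) _ C'(1) j])
      fix C'' :: "'m mod_ring mat"
      assume C'': "tail_identity d (Suc t) C''" "C'' $$ (Suc t, Suc t) = 1"
      show "linear_in_span d i C''"
      proof (rule linear_in_span_by_cleared_column[OF Suc(2) _ _ C''])
        fix D :: "'m mod_ring mat"
        assume "tail_identity d (Suc t) D" "\<forall>r<d. D $$ (r,Suc t) = (if r = Suc t then 1 else 0)"
        then have "tail_identity d t D" by (rule tail_identity_Suc_cleared)
        then show "linear_in_span d i D" using Suc by simp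
      qed simp
    qed simp
  qed
qed

lemma invertible_linear_in_span:
  assumes "0 < d" "A \<in> carrier_mat d d" "invertible_mat A"
  shows "linear_in_span d i (A :: 'm::nontriv mod_ring mat)"
proof -
  obtain B where "B \<in> carrier_mat d d" "B * A = 1\<^sub>m d" using invertible_matE[OF assms(3,2)] by blast
  then have "tail_identity d (d - 1) A" using assms(2) by (auto simp: tail_identity_def)
  then show ?thesis using assms(1) by (intro tail_identity_linear_in_span) auto
qed

section \<open>Translations\<close>

lemma translation_in_span_add:
  assumes "translation_in_span d i v" "translation_in_span d i w"
  shows "translation_in_span d i (w + v)"
proof -
  have v: "v \<in> carrier_mat d 1" and w: "w \<in> carrier_mat d 1"
    using assms by (auto simp: translation_in_span_def)
  have "gAGL (1\<^sub>m d) v * gAGL (1\<^sub>m d) w = gAGL (1\<^sub>m d) (w + v)"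
    using gAGL_mult[OF one_carrier_mat v one_carrier_mat w] w by simp
  then show ?thesis
    using assms AGL_span_mult v w by (metis translation_in_span_def add_carrier_mat)
qed

lemma translation_in_span_zero: "translation_in_span d i (0\<^sub>m d 1)"
  using AGL_span_one by (simp add: translation_in_span_def)

lemma translation_in_span_conj:
  assumes "linear_in_span d i A" "linear_in_span d i A'" "A * A' = 1\<^sub>m d"
    and "translation_in_span d i w"
  shows "translation_in_span d i (A * w)"
proof -
  have A: "A \<in> carrier_mat d d" "A' \<in> carrier_mat d d" and w: "w \<in> carrier_mat d 1"
    using assms by (auto simp: linear_in_span_def translation_in_span_def)
  have "gAGL A (0\<^sub>m d 1) * gAGL (1\<^sub>m d) w * gAGL A' (0\<^sub>m d 1) = gAGL A (A * w) * gAGL A' (0\<^sub>m d 1)"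
    using A w by (simp add: gAGL_mult)
  also have "\<dots> = gAGL (1\<^sub>m d) (A * w)"
    using A w assms(3) by (simp add: gAGL_mult)
  finally show ?thesis
    using assms AGL_span_mult A w
    by (metis linear_in_span_def translation_in_span_def mult_carrier_mat)
qed

lemma translation_in_span_generator: "translation_in_span d i (unit_vec_col d i)"
  by (auto intro!: generate.incl simp: translation_in_span_def AGL_gens_def)

lemma translation_in_span_smult_generator:
  "translation_in_span d i (c \<cdot>\<^sub>m unit_vec_col d i :: 'm::nontriv mod_ring mat)"
proof -
  have "translation_in_span d i (of_nat N \<cdot>\<^sub>m unit_vec_col d i :: 'm mod_ring mat)" for N
  proof (induction N)
    case 0
    have "(of_nat 0 :: 'm mod_ring) \<cdot>\<^sub>m unit_vec_col d i = 0\<^sub>m d 1" by (rule eq_matI) auto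
    then show ?case using translation_in_span_zero by simp
  next
    case (Suc N)
    have "(of_nat (Suc N) :: 'm mod_ring) \<cdot>\<^sub>m unit_vec_col d i
          = of_nat N \<cdot>\<^sub>m unit_vec_col d i + unit_vec_col d i"
      by (rule eq_matI) (auto simp: algebra_simps)
    then show ?case using translation_in_span_add[OF translation_in_span_generator Suc] by simp
  qed
  then show ?thesis using mod_ring_of_nat_surj[of c] by auto
qed

lemma translation_in_span_smult_unit_vec_col:
  assumes "i < d" "k < d"
  shows "translation_in_span d i (c \<cdot>\<^sub>m unit_vec_col d k :: 'm::nontriv mod_ring mat)"
proof (cases "k = i")
  case True
  then show ?thesis using translation_in_span_smult_generator by simp
next
  case False
  have "Emat d k i c * unit_vec_col d i = unit_vec_col d i + c \<cdot>\<^sub>m unit_vec_col d k"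
  proof (rule eq_matI)
    fix r j
    assume "r < dim_row (unit_vec_col d i + c \<cdot>\<^sub>m unit_vec_col d k)"
      "j < dim_col (unit_vec_col d i + c \<cdot>\<^sub>m unit_vec_col d k)"
    then have "r < d" "j = 0" by auto
    then show "(Emat d k i c * unit_vec_col d i) $$ (r,j)
               = (unit_vec_col d i + c \<cdot>\<^sub>m unit_vec_col d k) $$ (r,j)"
      using assms False
      by (simp del: index_mult_mat(1)
               add: index_Emat_mult[OF unit_vec_col_carrier] unit_vec_col_index)
  qed auto
  moreover have "translation_in_span d i (Emat d k i c * unit_vec_col d i)"
    by (rule translation_in_span_conj[where A' = "Emat d k i (- c)"])
      (use assms False in \<open>simp_all add: linear_in_span_Emat Emat_mult_Emat_uminus
                                      translation_in_span_generator\<close>)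
  ultimately have "translation_in_span d i
                     ((-1) \<cdot>\<^sub>m unit_vec_col d i + (unit_vec_col d i + c \<cdot>\<^sub>m unit_vec_col d k))"
    using translation_in_span_add translation_in_span_smult_generator by metis
  moreover have "(-1) \<cdot>\<^sub>m unit_vec_col d i + (unit_vec_col d i + c \<cdot>\<^sub>m unit_vec_col d k)
                 = c \<cdot>\<^sub>m unit_vec_col d k"
    by (rule eq_matI) auto
  ultimately show ?thesis by simp
qed

lemma translation_in_span_all:
  assumes "i < d" "v \<in> carrier_mat d 1"
  shows "translation_in_span d i (v :: 'm::nontriv mod_ring mat)"
proof -
  define v_upto where "v_upto N = mat d 1 (\<lambda>(r,c). if r < N then v $$ (r,0) else 0)" for N
  have "translation_in_span d i (v_upto N)" if "N \<le> d" for N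
    using that
  proof (induction N)
    case 0
    have "v_upto 0 = 0\<^sub>m d 1" unfolding v_upto_def by (rule eq_matI) auto
    then show ?case using translation_in_span_zero by simp
  next
    case (Suc N)
    have "v_upto (Suc N) = v $$ (N,0) \<cdot>\<^sub>m unit_vec_col d N + v_upto N"
      unfolding v_upto_def by (rule eq_matI) (auto simp: unit_vec_col_index less_Suc_eq)
    then show ?case
      using translation_in_span_add[OF Suc(1) translation_in_span_smult_unit_vec_col[OF assms(1)]]
        Suc(2)
      by simp
  qed
  moreover have "v_upto d = v" unfolding v_upto_def by (rule eq_matI) (use assms in auto)
  ultimately show ?thesis by auto
qed

lemma AGL_gens_subset: "AGL_gens d i \<subseteq> carrier (AGL d :: 'a::comm_ring_1 mat monoid)"
proof -
  have "invertible_mat (1\<^sub>m d :: 'a mat)" by (rule invertible_matI[of _ d "1\<^sub>m d"]) auto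
  moreover have "invertible_mat (Emat d k l 1 :: 'a mat)" if "k < d" "l < d" "k \<noteq> l" for k l
    using that by (rule invertible_Emat)
  moreover have "invertible_mat (Dmat d \<alpha> 0 :: 'a mat)" if "\<alpha> dvd 1" for \<alpha>
    using that by (rule invertible_Dmat)
  ultimately show ?thesis
    unfolding AGL_gens_def by (auto intro!: gAGL_in_AGL)
qed

lemma AGL_span_eq_carrier:
  assumes "i < d"
  shows "AGL_span d i = carrier (AGL d :: 'm::nontriv mod_ring mat monoid)"
proof
  show "AGL_span d i \<subseteq> carrier (AGL d :: 'm mod_ring mat monoid)"
    by (rule group.generate_incl[OF AGL_group AGL_gens_subset])
  show "carrier (AGL d) \<subseteq> (AGL_span d i :: 'm mod_ring mat set)"
  proof
    fix x :: "'m mod_ring mat"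
    assume "x \<in> carrier (AGL d)"
    then obtain A v
      where x: "x = gAGL A v" "A \<in> carrier_mat d d" "invertible_mat A" "v \<in> carrier_mat d 1"
      by (rule AGL_carrierE)
    have "gAGL (1\<^sub>m d) v * gAGL A (0\<^sub>m d 1) = x"
      using gAGL_mult[OF one_carrier_mat x(4) x(2) zero_carrier_mat] x by simp
    moreover have "linear_in_span d i A"
      using assms x by (intro invertible_linear_in_span) auto
    moreover have "translation_in_span d i v"
      using assms x by (intro translation_in_span_all) auto
    ultimately show "x \<in> AGL_span d i"
      by (metis AGL_span_mult linear_in_span_def translation_in_span_def)
  qed
qed

theorem lemma3p6:
  fixes n i :: nat
  assumes "n \<ge> 2" and "i < n - 1"
  shows "generate (AGL (n - 1) :: 'm::nontriv mod_ring mat monoid)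
           ({gAGL (1\<^sub>m (n - 1)) (unit_vec_col (n - 1) i)}
            \<union> {gAGL (Emat (n - 1) k l 1) (0\<^sub>m (n - 1) 1) | k l. k < n - 1 \<and> l < n - 1 \<and> k \<noteq> l}
            \<union> {gAGL (Dmat (n - 1) \<alpha> 0) (0\<^sub>m (n - 1) 1) | \<alpha>. \<alpha> dvd 1})
         = carrier (AGL (n - 1) :: 'm::nontriv mod_ring mat monoid)"
  using AGL_span_eq_carrier[OF assms(2)] by (simp add: AGL_gens_def)

end
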